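(* Let $k\ge 1$, $d\ge 1$, $n\ge 1$ and $t\ge k$ be integers, and let $F_1,\dots,F_n\subset\mathbb{R}^d$ be sets of $t$ points each (regarded as colour classes). (i) If $n=(k-1)d+1$ and $t=k$, then there is a colourful $k$-partition $A_1,\dots,A_k$ of $F_1,\dots,F_n$ whose convex hulls intersect with equal coefficients. (ii) If $n<(k-1)d+1$, then for every value of $t$ the statement in (i) fails: there exist sets $F_1,\dots,F_n\subset\mathbb{R}^d$ of $t$ points each such that no colourful $k$-partition of them has convex hulls intersecting with equal coefficients.
   Context: A colourful set is a set containing exactly one point from each colour class $F_j$. A colourful $k$-partition of $F_1,\dots,F_n$ is a family of $k$ pairwise disjoint colourful sets $A_1,\dots,A_k$ (even if the classes have more than $k$ points). We write $A_i=\{x^i_j : x^i_j\in F_j,\ j=1,\dots,n\}$. The convex hulls of $A_1,\dots,A_k$ intersect with equal coefficients if there are real numbers $\alpha_1,\dots,\alpha_n\ge 0$ with $\sum_j\alpha_j=1$ such that the point $\sum_{j=1}^n\alpha_j x^i_j$ is the same for all $i=1,\dots,k$. *)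

theory Defs
  imports "HOL-Analysis.Analysis"
begin

text \<open>A colourful k-partition is given by points x i j (colourful set A_i = {x i j | j < n}),
with x i j in F j; the sets A_i are pairwise disjoint as sets of coloured points,
i.e. for each colour j the points x 0 j, ..., x (k-1) j are distinct.\<close>

definition colourful_partition ::
  "(nat \<Rightarrow> 'a set) \<Rightarrow> nat \<Rightarrow> nat \<Rightarrow> (nat \<Rightarrow> nat \<Rightarrow> 'a) \<Rightarrow> bool" where
  "colourful_partition F n k x \<longleftrightarrow>
     (\<forall>i<k. \<forall>j<n. x i j \<in> F j) \<and> (\<forall>j<n. inj_on (\<lambda>i. x i j) {..<k})"

definition intersect_equal_coeffs ::
  "nat \<Rightarrow> nat \<Rightarrow> (nat \<Rightarrow> nat \<Rightarrow> 'a::real_vector) \<Rightarrow> bool" where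
  "intersect_equal_coeffs n k x \<longleftrightarrow>
     (\<exists>\<alpha> :: nat \<Rightarrow> real. (\<forall>j<n. \<alpha> j \<ge> 0) \<and> (\<Sum>j<n. \<alpha> j) = 1 \<and>
        (\<forall>i<k. \<forall>i'<k. (\<Sum>j<n. \<alpha> j *\<^sub>R x i j) = (\<Sum>j<n. \<alpha> j *\<^sub>R x i' j)))"

end

theory Submission
  imports Defs
begin

text \<open>Part (i) follows Sarkaria's reduction to Barany's colourful Caratheodory theorem.
  Enumerate each colour class as \<open>e j 0, \<dots>, e j (k - 1)\<close>; a rotation \<open>r j\<close> of every colour \<open>j\<close>
  gives the colourful sets \<open>A\<^sub>i = {e j ((i + r j) mod k) | j < n}\<close>.  That the \<open>i\<close>-th and the last
  combination with coefficients \<open>\<alpha>\<close> agree, for all \<open>i < k - 1\<close>, is a system of \<open>(k - 1) d\<close> linear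
  conditions, and for each colour the average over all its rotations satisfies them.  So colourful
  Caratheodory in dimension \<open>(k - 1) d\<close> with \<open>(k - 1) d + 1\<close> colours yields suitable rotations and
  coefficients.  Colourful Caratheodory itself is proved by minimising the distance of a colourful
  convex combination to the origin.

  For part (ii), colour \<open>j\<close> is placed on the coordinate axis \<open>j mod d\<close> at the points \<open>B\<^sup>p\<close>, \<open>p < t\<close>,
  so that every axis carries at most \<open>k - 1\<close> colours.  On an axis carrying a colour of positive
  weight, the \<open>k\<close> combinations cannot all agree: a signed weighting that favours, for each colour,
  the set holding its largest power makes their weighted sum both zero and positive.\<close>

definition std_simplex :: "nat \<Rightarrow> (nat \<Rightarrow> real) set" where
  "std_simplex n = {\<alpha>. (\<forall>j<n. 0 \<le> \<alpha> j) \<and> (\<forall>j\<ge>n. \<alpha> j = 0) \<and> (\<Sum>j<n. \<alpha> j) = 1}"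

text \<open>Vectors of \<open>\<real>\<^sup>D\<close> are functions \<open>nat \<Rightarrow> real\<close> of which only the first \<open>D\<close> coordinates are
  used; \<open>y j q\<close> is the \<open>q\<close>-th coordinate of the \<open>j\<close>-th vector of a family.\<close>

definition lin_comb :: "nat \<Rightarrow> (nat \<Rightarrow> nat \<Rightarrow> real) \<Rightarrow> (nat \<Rightarrow> real) \<Rightarrow> nat \<Rightarrow> real" where
  "lin_comb n y \<alpha> q = (\<Sum>j<n. \<alpha> j * y j q)"

definition dotp :: "nat \<Rightarrow> (nat \<Rightarrow> real) \<Rightarrow> (nat \<Rightarrow> real) \<Rightarrow> real" where
  "dotp D u v = (\<Sum>q<D. u q * v q)"

abbreviation sqnorm :: "nat \<Rightarrow> (nat \<Rightarrow> real) \<Rightarrow> real" where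
  "sqnorm D v \<equiv> dotp D v v"

lemma sqnorm_nonneg: "0 \<le> sqnorm D v"
  by (simp add: dotp_def sum_nonneg)

lemma sqnorm_eq_0_iff: "sqnorm D v = 0 \<longleftrightarrow> (\<forall>q<D. v q = 0)"
  by (auto simp: dotp_def sum_nonneg_eq_0_iff)

lemma dotp_lin_comb_right: "dotp D u (lin_comb n y \<alpha>) = (\<Sum>j<n. \<alpha> j * dotp D u (y j))"
  unfolding dotp_def lin_comb_def sum_distrib_left
  by (subst sum.swap) (simp add: mult_ac)

lemma std_simplex_nonempty: "0 < n \<Longrightarrow> (\<lambda>j. if j = 0 then 1 else 0) \<in> std_simplex n"
  by (auto simp: std_simplex_def)

lemma compact_std_simplex: "compact (std_simplex n)"
proof -
  define C where "C = PiE UNIV (\<lambda>j. if j < n then {0..(1::real)} else {0})"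
  have "compactin (product_topology (\<lambda>_. euclidean) UNIV) C"
    unfolding C_def by (subst compactin_PiE) auto
  hence "compact C" by (simp add: euclidean_product_topology)
  moreover have "closed {\<alpha>::nat\<Rightarrow>real. (\<Sum>j<n. \<alpha> j) = 1}"
    by (intro closed_Collect_eq continuous_intros continuous_on_product_coordinates)
  moreover have "std_simplex n = C \<inter> {\<alpha>. (\<Sum>j<n. \<alpha> j) = 1}"
  proof (intro equalityI subsetI)
    fix \<alpha> assume \<alpha>: "\<alpha> \<in> std_simplex n"
    have "\<alpha> j \<le> 1" if "j < n" for j
      using member_le_sum[of j "{..<n}" \<alpha>] \<alpha> that by (auto simp: std_simplex_def)
    with \<alpha> show "\<alpha> \<in> C \<inter> {\<alpha>. (\<Sum>j<n. \<alpha> j) = 1}"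
      by (auto simp: C_def std_simplex_def PiE_iff not_less)
  qed (auto simp: C_def std_simplex_def PiE_iff split: if_splits; metis leD)
  ultimately show ?thesis by (simp add: compact_Int_closed)
qed

lemma nonneg_if_nonneg_near_zero:
  fixes a b :: real
  assumes "\<And>t. 0 < t \<Longrightarrow> t \<le> 1 \<Longrightarrow> 0 \<le> a + t * b"
  shows "0 \<le> a"
proof (rule tendsto_lowerbound)
  show "((\<lambda>t. a + t * b) \<longlongrightarrow> a) (at_right 0)"
    by (auto intro!: tendsto_eq_intros)
  show "\<forall>\<^sub>F t in at_right 0. 0 \<le> a + t * b"
    using assms by (auto simp: eventually_at_right_field intro!: exI[of _ 1])
qed simp

lemma exists_nontrivial_linear_relation:
  fixes v :: "'a \<Rightarrow> nat \<Rightarrow> real"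
  assumes "finite J" "D < card J"
  shows "\<exists>c. (\<exists>j\<in>J. c j \<noteq> 0) \<and> (\<forall>q<D. (\<Sum>j\<in>J. c j * v j q) = 0)"
  using assms
proof (induction D arbitrary: J v)
  case 0
  then obtain j where "j \<in> J" by fastforce
  then show ?case by (intro exI[of _ "\<lambda>_. 1"]) auto
next
  case (Suc D)
  show ?case
  proof (cases "\<forall>j\<in>J. v j D = 0")
    case True
    obtain c where c: "\<exists>j\<in>J. c j \<noteq> 0" "\<forall>q<D. (\<Sum>j\<in>J. c j * v j q) = 0"
      using Suc by force
    with True show ?thesis by (auto simp: less_Suc_eq)
  next
    case False
    then obtain j0 where j0: "j0 \<in> J" "v j0 D \<noteq> 0" by auto
    define u where "u j q = v j q - (v j D / v j0 D) * v j0 q" for j q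
    obtain c' where c': "\<exists>j\<in>J - {j0}. c' j \<noteq> 0" "\<forall>q<D. (\<Sum>j\<in>J - {j0}. c' j * u j q) = 0"
      using Suc.IH[of "J - {j0}" u] Suc.prems j0 by (auto simp: less_diff_conv)
    define c where "c j = (if j = j0 then - (\<Sum>i\<in>J - {j0}. c' i * v i D) / v j0 D else c' j)" for j
    have reduce: "(\<Sum>j\<in>J. c j * v j q) = (\<Sum>j\<in>J - {j0}. c' j * u j q)" for q
    proof -
      have "(\<Sum>j\<in>J. c j * v j q) = c j0 * v j0 q + (\<Sum>j\<in>J - {j0}. c' j * v j q)"
        using Suc.prems(1) j0 by (simp add: sum.remove c_def)
      also have "\<dots> = (\<Sum>j\<in>J - {j0}. c' j * u j q)"
        by (simp add: c_def u_def algebra_simps sum_subtractf sum_distrib_left sum_divide_distrib)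
      finally show ?thesis .
    qed
    have "(\<Sum>j\<in>J. c j * v j q) = 0" if "q < Suc D" for q
      using that c' j0(2) by (auto simp: reduce u_def less_Suc_eq)
    moreover have "\<exists>j\<in>J. c j \<noteq> 0" using c' by (auto simp: c_def)
    ultimately show ?thesis by blast
  qed
qed

lemma simplex_minimiser_first_order:
  assumes \<alpha>: "\<alpha> \<in> std_simplex n" and j: "j < n"
    and min: "\<And>\<beta>. \<beta> \<in> std_simplex n \<Longrightarrow>
                sqnorm D (lin_comb n y \<alpha>) \<le> sqnorm D (lin_comb n y \<beta>)"
  shows "sqnorm D (lin_comb n y \<alpha>) \<le> dotp D (lin_comb n y \<alpha>) (y j)"
proof -
  define P where "P = lin_comb n y \<alpha>"
  define Y where "Y = (\<lambda>q. y j q - P q)"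
  have "0 \<le> 2 * dotp D P Y + t * sqnorm D Y" if t: "0 < t" "t \<le> 1" for t
  proof -
    define \<beta> where "\<beta> i = (1 - t) * \<alpha> i + (if i = j then t else 0)" for i
    have "\<beta> \<in> std_simplex n"
      using \<alpha> t j by (auto simp: std_simplex_def \<beta>_def sum.distrib sum_distrib_left[symmetric])
    moreover have "lin_comb n y \<beta> = (\<lambda>q. P q + t * Y q)"
    proof
      fix q
      have "lin_comb n y \<beta> q = (1 - t) * P q + (\<Sum>i<n. if i = j then t * y i q else 0)"
        by (simp add: lin_comb_def \<beta>_def P_def distrib_right sum.distrib sum_distrib_left
            mult.assoc if_distrib[of "\<lambda>x. x * _"] cong: if_cong)
      also have "\<dots> = P q + t * Y q"
        using j by (simp add: Y_def algebra_simps)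
      finally show "lin_comb n y \<beta> q = P q + t * Y q" .
    qed
    moreover have "sqnorm D (\<lambda>q. P q + t * Y q)
        = sqnorm D P + t * (2 * dotp D P Y + t * sqnorm D Y)"
      by (simp add: dotp_def algebra_simps sum.distrib sum_distrib_left)
    ultimately have "0 \<le> t * (2 * dotp D P Y + t * sqnorm D Y)"
      using min[of \<beta>] by (simp add: P_def)
    with t show ?thesis by (simp add: zero_le_mult_iff)
  qed
  then have "0 \<le> 2 * dotp D P Y"
    by (rule nonneg_if_nonneg_near_zero)
  then show ?thesis
    by (simp add: P_def Y_def dotp_def algebra_simps sum_subtractf)
qed

lemma simplex_minimiser_tight:
  assumes \<alpha>: "\<alpha> \<in> std_simplex n" and pos: "\<And>j. j < n \<Longrightarrow> 0 < \<alpha> j" and j: "j < n"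
    and min: "\<And>\<beta>. \<beta> \<in> std_simplex n \<Longrightarrow>
                sqnorm D (lin_comb n y \<alpha>) \<le> sqnorm D (lin_comb n y \<beta>)"
  shows "dotp D (lin_comb n y \<alpha>) (y j) = sqnorm D (lin_comb n y \<alpha>)"
proof -
  define P where "P = lin_comb n y \<alpha>"
  define g where "g i = \<alpha> i * (dotp D P (y i) - sqnorm D P)" for i
  have g_nonneg: "0 \<le> g i" if "i < n" for i
    using simplex_minimiser_first_order[OF \<alpha> that min] pos[OF that] by (simp add: g_def P_def)
  have "(\<Sum>i<n. g i) = sqnorm D P - (\<Sum>i<n. \<alpha> i) * sqnorm D P"
    by (simp add: g_def P_def dotp_lin_comb_right[symmetric] algebra_simps sum_subtractf
        sum_distrib_right)
  also have "\<dots> = 0" using \<alpha> by (simp add: std_simplex_def)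
  finally have "\<forall>i\<in>{..<n}. g i = 0"
    using g_nonneg by (subst (asm) sum_nonneg_eq_0_iff) auto
  then have "g j = 0" using j by simp
  then show ?thesis using pos[OF j] by (simp add: g_def P_def)
qed

text \<open>A linear relation among the \<open>D + 1\<close> vectors \<open>P\<close> and \<open>y j - y 0\<close> has no \<open>P\<close>-component, since
  \<open>P\<close> is orthogonal to the differences; it is therefore an affine dependence of the \<open>y j\<close>.\<close>

lemma affine_dependence_in_hyperplane:
  assumes P: "sqnorm D P \<noteq> 0" and on_plane: "\<And>j. j < Suc D \<Longrightarrow> dotp D P (y j) = c"
  obtains \<mu> where "\<exists>j<Suc D. \<mu> j \<noteq> 0" "(\<Sum>j<Suc D. \<mu> j) = 0"
    "\<And>q. q < D \<Longrightarrow> lin_comb (Suc D) y \<mu> q = 0"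
proof -
  define v where "v j = (if j = 0 then P else (\<lambda>q. y j q - y 0 q))" for j
  obtain a where a: "\<exists>j<Suc D. a j \<noteq> 0" and rel: "\<And>q. q < D \<Longrightarrow> (\<Sum>j<Suc D. a j * v j q) = 0"
    using exists_nontrivial_linear_relation[of "{..<Suc D}" D v] by auto
  define w where "w j q = y (Suc j) q - y 0 q" for j q
  have rel': "a 0 * P q + lin_comb D w (\<lambda>j. a (Suc j)) q = 0" if "q < D" for q
    using rel[OF that] unfolding sum.lessThan_Suc_shift by (simp add: v_def w_def lin_comb_def)
  have "a 0 * sqnorm D P + dotp D P (lin_comb D w (\<lambda>j. a (Suc j)))
      = dotp D P (\<lambda>q. a 0 * P q + lin_comb D w (\<lambda>j. a (Suc j)) q)"
    by (simp add: dotp_def sum.distrib sum_distrib_left algebra_simps)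
  also have "\<dots> = 0"
    using rel' by (simp add: dotp_def)
  finally have "a 0 * sqnorm D P + (\<Sum>j<D. a (Suc j) * dotp D P (w j)) = 0"
    by (simp add: dotp_lin_comb_right)
  moreover have "dotp D P (w j) = 0" if "j < D" for j
    using on_plane[of "Suc j"] on_plane[of 0] that
    by (simp add: w_def dotp_def right_diff_distrib sum_subtractf)
  ultimately have a0: "a 0 = 0" using P by simp
  define \<mu> where "\<mu> j = (if j = 0 then - (\<Sum>i<D. a (Suc i)) else a j)" for j
  show ?thesis
  proof
    obtain j where "j < Suc D" "a j \<noteq> 0" using a by blast
    with a0 show "\<exists>j<Suc D. \<mu> j \<noteq> 0"
      by (intro exI[of _ j]) (auto simp: \<mu>_def)
    show "(\<Sum>j<Suc D. \<mu> j) = 0"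
      unfolding sum.lessThan_Suc_shift by (simp add: \<mu>_def)
    show "lin_comb (Suc D) y \<mu> q = 0" if "q < D" for q
      using rel'[OF that] a0 unfolding lin_comb_def sum.lessThan_Suc_shift
      by (simp add: w_def \<mu>_def right_diff_distrib sum_subtractf sum_distrib_right)
  qed
qed

lemma simplex_point_with_zero_weight:
  assumes \<alpha>: "\<alpha> \<in> std_simplex n"
    and \<mu>: "\<exists>j<n. \<mu> j \<noteq> 0" "(\<Sum>j<n. \<mu> j) = 0" "\<And>q. q < D \<Longrightarrow> lin_comb n y \<mu> q = 0"
  obtains \<alpha>' where "\<alpha>' \<in> std_simplex n" "\<exists>j<n. \<alpha>' j = 0"
    "\<And>q. q < D \<Longrightarrow> lin_comb n y \<alpha>' q = lin_comb n y \<alpha> q"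
proof -
  have "\<exists>j<n. 0 < \<mu> j"
  proof (rule ccontr)
    assume "\<not> (\<exists>j<n. 0 < \<mu> j)"
    then have "\<forall>j\<in>{..<n}. 0 \<le> - \<mu> j" by auto
    moreover have "(\<Sum>j<n. - \<mu> j) = 0" using \<mu>(2) by (simp add: sum_negf)
    ultimately have "\<forall>j<n. \<mu> j = 0" by (subst (asm) sum_nonneg_eq_0_iff) auto
    with \<mu>(1) show False by blast
  qed
  define Pos where "Pos = {j. j < n \<and> 0 < \<mu> j}"
  have Pos: "finite Pos" "Pos \<noteq> {}"
    using \<open>\<exists>j<n. 0 < \<mu> j\<close> by (auto simp: Pos_def)
  \<comment> \<open>the largest step along \<open>-\<mu>\<close> that keeps all weights nonnegative\<close>
  define s where "s = Min ((\<lambda>j. \<alpha> j / \<mu> j) ` Pos)"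
  have "s \<in> (\<lambda>j. \<alpha> j / \<mu> j) ` Pos"
    unfolding s_def using Pos by (intro Min_in) auto
  then obtain j1 where j1: "j1 \<in> Pos" "s = \<alpha> j1 / \<mu> j1" by blast
  have s_le: "s \<le> \<alpha> j / \<mu> j" if "j \<in> Pos" for j
    using Pos that by (simp add: s_def)
  have s_nonneg: "0 \<le> s"
    using j1 \<alpha> by (auto simp: Pos_def std_simplex_def)
  define \<alpha>' where "\<alpha>' j = (if j < n then \<alpha> j - s * \<mu> j else 0)" for j
  show ?thesis
  proof
    have "0 \<le> \<alpha>' j" if "j < n" for j
    proof (cases "0 < \<mu> j")
      case True
      then show ?thesis
        using s_le[of j] that by (simp add: \<alpha>'_def Pos_def field_simps)
    next
      case False
      then have "s * \<mu> j \<le> 0" using s_nonneg by (simp add: mult_nonneg_nonpos)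
      moreover have "0 \<le> \<alpha> j" using \<alpha> that by (simp add: std_simplex_def)
      ultimately show ?thesis using that by (simp add: \<alpha>'_def)
    qed
    then show "\<alpha>' \<in> std_simplex n"
      using \<alpha> \<mu>(2) by (simp add: std_simplex_def \<alpha>'_def sum_subtractf sum_distrib_left[symmetric])
    show "\<exists>j<n. \<alpha>' j = 0"
      using j1 by (intro exI[of _ j1]) (auto simp: \<alpha>'_def Pos_def)
    show "lin_comb n y \<alpha>' q = lin_comb n y \<alpha> q" if "q < D" for q
    proof -
      have "lin_comb n y \<alpha>' q = lin_comb n y \<alpha> q - s * lin_comb n y \<mu> q"
        by (simp add: lin_comb_def \<alpha>'_def algebra_simps sum_subtractf sum_distrib_left)
      then show ?thesis using \<mu>(3)[OF that] by simp
    qed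
  qed
qed

lemma exists_colourful_minimiser:
  fixes k :: nat
  assumes k: "0 < k" and n: "0 < n"
  obtains r \<alpha> where "\<forall>j<n. r j < k" "\<alpha> \<in> std_simplex n"
    "\<And>r' \<beta>. \<forall>j<n. r' j < k \<Longrightarrow> \<beta> \<in> std_simplex n \<Longrightarrow>
       sqnorm D (lin_comb n (\<lambda>j. W j (r j)) \<alpha>) \<le> sqnorm D (lin_comb n (\<lambda>j. W j (r' j)) \<beta>)"
proof -
  define f where "f r \<alpha> = sqnorm D (lin_comb n (\<lambda>j. W j (r j)) \<alpha>)" for r \<alpha>
  have "continuous_on UNIV (f r)" for r
    unfolding f_def dotp_def lin_comb_def
    by (intro continuous_intros continuous_on_product_coordinates)
  then have "\<exists>\<alpha>\<in>std_simplex n. \<forall>\<beta>\<in>std_simplex n. f r \<alpha> \<le> f r \<beta>" for r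
    using continuous_attains_inf[OF compact_std_simplex] std_simplex_nonempty[OF n]
    by (metis continuous_on_subset empty_iff subset_UNIV)
  then obtain a where a: "\<And>r. a r \<in> std_simplex n" "\<And>r \<beta>. \<beta> \<in> std_simplex n \<Longrightarrow> f r (a r) \<le> f r \<beta>"
    by metis
  define R where "R = PiE {..<n} (\<lambda>_. {..<k})"
  have R: "finite R" "R \<noteq> {}"
    using k by (auto simp: R_def PiE_eq_empty_iff intro: finite_PiE)
  have f_restrict: "f (restrict r {..<n}) = f r" for r
  proof -
    have "lin_comb n (\<lambda>j. W j (restrict r {..<n} j)) = lin_comb n (\<lambda>j. W j (r j))"
      by (auto simp: lin_comb_def intro!: ext sum.cong)
    then show ?thesis by (simp add: f_def[abs_def])
  qed
  have "Min ((\<lambda>r. f r (a r)) ` R) \<in> (\<lambda>r. f r (a r)) ` R"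
    using R by (intro Min_in) auto
  then obtain r0 where r0: "r0 \<in> R" "f r0 (a r0) = Min ((\<lambda>r. f r (a r)) ` R)" by auto
  show ?thesis
  proof
    show "\<forall>j<n. r0 j < k" using r0 by (auto simp: R_def)
    show "a r0 \<in> std_simplex n" by (rule a)
    fix r' \<beta> assume "\<forall>j<n. r' j < k" "\<beta> \<in> std_simplex n"
    then have "restrict r' {..<n} \<in> R" by (auto simp: R_def)
    then have "f r0 (a r0) \<le> f (restrict r' {..<n}) (a (restrict r' {..<n}))"
      using R r0 by simp
    also have "\<dots> \<le> f r' \<beta>"
      using a(2)[OF \<open>\<beta> \<in> std_simplex n\<close>, of "restrict r' {..<n}"] by (simp only: f_restrict)
    finally show "sqnorm D (lin_comb n (\<lambda>j. W j (r0 j)) (a r0))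
        \<le> sqnorm D (lin_comb n (\<lambda>j. W j (r' j)) \<beta>)"
      by (simp only: f_def)
  qed
qed

text \<open>The point of a colour with weight zero can be exchanged for any other point of its class
  without changing the optimum, so every point of that class satisfies the first-order condition;
  since \<open>0\<close> lies in the convex hull of the class, the optimum vanishes.\<close>

lemma colourful_minimiser_zero_weight:
  assumes hull: "\<exists>\<gamma>\<in>std_simplex k. \<forall>q<D. lin_comb k (W j0) \<gamma> q = 0"
    and r: "\<forall>j<n. r j < k" and \<alpha>: "\<alpha> \<in> std_simplex n" and j0: "j0 < n" "\<alpha> j0 = 0"
    and min: "\<And>r' \<beta>. \<forall>j<n. r' j < k \<Longrightarrow> \<beta> \<in> std_simplex n \<Longrightarrow>
       sqnorm D (lin_comb n (\<lambda>j. W j (r j)) \<alpha>) \<le> sqnorm D (lin_comb n (\<lambda>j. W j (r' j)) \<beta>)"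
  shows "sqnorm D (lin_comb n (\<lambda>j. W j (r j)) \<alpha>) = 0"
proof -
  define P where "P = lin_comb n (\<lambda>j. W j (r j)) \<alpha>"
  have ge: "sqnorm D P \<le> dotp D P (W j0 s)" if s: "s < k" for s
  proof -
    define y where "y = (\<lambda>j. W j ((r(j0 := s)) j))"
    have y_alpha: "lin_comb n y \<alpha> = P"
      using j0 by (auto simp: P_def y_def lin_comb_def intro!: ext sum.cong)
    have r': "\<forall>j<n. (r(j0 := s)) j < k" using r s by simp
    have "sqnorm D (lin_comb n y \<alpha>) \<le> dotp D (lin_comb n y \<alpha>) (y j0)"
    proof (rule simplex_minimiser_first_order[OF \<alpha> j0(1)])
      fix \<beta> assume "\<beta> \<in> std_simplex n"
      then show "sqnorm D (lin_comb n y \<alpha>) \<le> sqnorm D (lin_comb n y \<beta>)"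
        using min[OF r'] unfolding y_alpha by (simp add: P_def y_def)
    qed
    then show ?thesis unfolding y_alpha by (simp add: y_def)
  qed
  obtain \<gamma> where \<gamma>: "\<gamma> \<in> std_simplex k" "\<forall>q<D. lin_comb k (W j0) \<gamma> q = 0"
    using hull by blast
  have "0 = dotp D P (lin_comb k (W j0) \<gamma>)"
    using \<gamma>(2) by (simp add: dotp_def)
  also have "\<dots> = (\<Sum>s<k. \<gamma> s * dotp D P (W j0 s))"
    by (rule dotp_lin_comb_right)
  also have "\<dots> \<ge> (\<Sum>s<k. \<gamma> s * sqnorm D P)"
    using \<gamma>(1) ge by (intro sum_mono mult_left_mono) (auto simp: std_simplex_def)
  also have "(\<Sum>s<k. \<gamma> s * sqnorm D P) = sqnorm D P"
    using \<gamma>(1) by (simp add: std_simplex_def sum_distrib_right[symmetric])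
  finally show ?thesis
    using sqnorm_nonneg[of D P] by (simp add: P_def)
qed

theorem colourful_caratheodory:
  assumes hull: "\<And>j. j < Suc D \<Longrightarrow> \<exists>\<gamma>\<in>std_simplex k. \<forall>q<D. lin_comb k (W j) \<gamma> q = 0"
  obtains r \<alpha> where "\<forall>j<Suc D. r j < k" "\<alpha> \<in> std_simplex (Suc D)"
    "\<And>q. q < D \<Longrightarrow> lin_comb (Suc D) (\<lambda>j. W j (r j)) \<alpha> q = 0"
proof -
  have "0 < k"
    using hull[of 0] by (cases k) (auto simp: std_simplex_def)
  then obtain r \<alpha> where r: "\<forall>j<Suc D. r j < k" and \<alpha>: "\<alpha> \<in> std_simplex (Suc D)"
    and min: "\<And>r' \<beta>. \<forall>j<Suc D. r' j < k \<Longrightarrow> \<beta> \<in> std_simplex (Suc D) \<Longrightarrow>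
       sqnorm D (lin_comb (Suc D) (\<lambda>j. W j (r j)) \<alpha>) \<le> sqnorm D (lin_comb (Suc D) (\<lambda>j. W j (r' j)) \<beta>)"
    using exists_colourful_minimiser[of k "Suc D" D W] by blast
  define y where "y = (\<lambda>j. W j (r j))"
  define P where "P = lin_comb (Suc D) y \<alpha>"
  have "sqnorm D P = 0"
  proof (rule ccontr)
    assume P: "sqnorm D P \<noteq> 0"
    have min_r: "\<And>\<beta>. \<beta> \<in> std_simplex (Suc D) \<Longrightarrow> sqnorm D P \<le> sqnorm D (lin_comb (Suc D) y \<beta>)"
      using min r by (simp add: P_def y_def)
    have pos: "0 < \<alpha> j" if j: "j < Suc D" for j
    proof (rule ccontr)
      assume "\<not> 0 < \<alpha> j"
      moreover have "0 \<le> \<alpha> j" using \<alpha> j by (simp add: std_simplex_def)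
      ultimately have "\<alpha> j = 0" by simp
      then have "sqnorm D (lin_comb (Suc D) (\<lambda>j. W j (r j)) \<alpha>) = 0"
        by (rule colourful_minimiser_zero_weight[where W = W, OF hull[OF j] r \<alpha> j _ min])
      with P show False by (simp add: P_def y_def)
    qed
    have tight: "dotp D P (y j) = sqnorm D P" if "j < Suc D" for j
      using simplex_minimiser_tight[OF \<alpha> pos that] min_r unfolding P_def by blast
    obtain \<mu> where \<mu>: "\<exists>j<Suc D. \<mu> j \<noteq> 0" "(\<Sum>j<Suc D. \<mu> j) = 0"
      "\<And>q. q < D \<Longrightarrow> lin_comb (Suc D) y \<mu> q = 0"
      using affine_dependence_in_hyperplane[where y = y, OF P tight] by blast
    obtain \<alpha>' where \<alpha>': "\<alpha>' \<in> std_simplex (Suc D)" "\<exists>j<Suc D. \<alpha>' j = 0"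
      and same: "\<And>q. q < D \<Longrightarrow> lin_comb (Suc D) y \<alpha>' q = P q"
      using simplex_point_with_zero_weight[OF \<alpha> \<mu>] unfolding P_def by blast
    obtain j1 where j1: "j1 < Suc D" "\<alpha>' j1 = 0" using \<alpha>'(2) by blast
    have "sqnorm D (lin_comb (Suc D) y \<alpha>') = sqnorm D P"
      using same by (simp add: dotp_def)
    then have "sqnorm D (lin_comb (Suc D) (\<lambda>j. W j (r j)) \<alpha>') = 0"
      using colourful_minimiser_zero_weight[where W = W, OF hull[OF j1(1)] r \<alpha>'(1) j1] min
      by (simp add: P_def y_def)
    with P \<open>sqnorm D (lin_comb (Suc D) y \<alpha>') = sqnorm D P\<close> show False
      by (simp add: y_def)
  qed
  then show ?thesis
    using that[OF r \<alpha>] by (simp add: sqnorm_eq_0_iff P_def y_def)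
qed

lemma bij_betw_rotate_mod:
  fixes k b :: nat
  assumes k: "0 < k"
  shows "bij_betw (\<lambda>i. (i + b) mod k) {..<k} {..<k}"
proof -
  have "y \<in> (\<lambda>i. (i + b) mod k) ` {..<k}" if y: "y < k" for y
  proof
    have "y + (k - b mod k) + b = y + (b div k * k + k)"
      using mod_less_divisor[OF k, of b] div_mult_mod_eq[of b k] by linarith
    also have "\<dots> = y + (b div k + 1) * k" by simp
    finally have "y + (k - b mod k) + b = y + (b div k + 1) * k" .
    then show "y = ((y + (k - b mod k)) mod k + b) mod k"
      using y by (simp only: mod_add_left_eq mod_mult_self1 mod_less)
    show "(y + (k - b mod k)) mod k \<in> {..<k}" using k by simp
  qed
  moreover have "(\<lambda>i. (i + b) mod k) ` {..<k} \<subseteq> {..<k}" using k by auto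
  ultimately show ?thesis
    by (auto simp: bij_betw_def intro: finite_surj_inj)
qed

lemma sum_rotate_mod:
  fixes k b :: nat
  assumes "0 < k"
  shows "(\<Sum>i<k. f ((i + b) mod k)) = (\<Sum>i<k. f i)"
  using sum.reindex_bij_betw[OF bij_betw_rotate_mod[OF assms]] by simp

lemma colourful_partition_rotation:
  assumes "\<And>j. j < n \<Longrightarrow> bij_betw (e j) {..<k} (F j)"
  shows "colourful_partition F n k (\<lambda>i j. e j ((i + r j) mod k))"
  unfolding colourful_partition_def
proof (intro conjI allI impI)
  fix i j assume "i < k" "j < n"
  then show "e j ((i + r j) mod k) \<in> F j"
    using assms[of j] by (auto intro: bij_betw_apply)
next
  fix j assume j: "j < n"
  show "inj_on (\<lambda>i. e j ((i + r j) mod k)) {..<k}"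
  proof (cases "k = 0")
    case False
    then show ?thesis
      using bij_betw_rotate_mod[of k "r j"] assms[OF j]
      by (simp add: bij_betw_def comp_inj_on[of "\<lambda>i. (i + r j) mod k", unfolded o_def])
  qed simp
qed

text \<open>Coordinate \<open>q = i d + c\<close> of the \<open>(k - 1) d\<close>-dimensional space records coordinate \<open>c\<close> of the
  difference between the \<open>i\<close>-th and the last rotated point of a colour.\<close>

lemma rotations_with_equal_coeffs:
  fixes e :: "nat \<Rightarrow> nat \<Rightarrow> real ^ 'd::finite"
  assumes k: "0 < k" and n: "n = (k - 1) * CARD('d) + 1"
  obtains r where "intersect_equal_coeffs n k (\<lambda>i j. e j ((i + r j) mod k))"
proof -
  define d where "d = CARD('d)"
  define D where "D = (k - 1) * d"
  obtain g where g: "bij_betw g {..<d} (UNIV :: 'd set)"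
    using ex_bij_betw_nat_finite[of "UNIV :: 'd set"] by (auto simp: d_def lessThan_atLeast0)
  define h where "h = inv_into {..<d} g"
  have g_h: "g (h c) = c" for c
    using g by (simp add: h_def bij_betw_inv_into_right)
  have h_lt: "h c < d" for c
    using g inv_into_into[of c g "{..<d}"] by (auto simp: h_def bij_betw_def)
  define W where
    "W j s q = (e j ((q div d + s) mod k) - e j ((k - 1 + s) mod k)) $ g (q mod d)" for j s q
  define \<gamma> :: "nat \<Rightarrow> real" where "\<gamma> s = (if s < k then 1 / k else 0)" for s
  have "\<exists>\<gamma>\<in>std_simplex k. \<forall>q<D. lin_comb k (W j) \<gamma> q = 0" for j
  proof (intro bexI allI impI)
    show "\<gamma> \<in> std_simplex k" using k by (simp add: std_simplex_def \<gamma>_def)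
    fix q
    have "lin_comb k (W j) \<gamma> q = (1 / k) * (\<Sum>s<k. W j s q)"
      by (simp add: lin_comb_def \<gamma>_def sum_distrib_left)
    also have "(\<Sum>s<k. W j s q)
        = ((\<Sum>s<k. e j ((s + q div d) mod k)) - (\<Sum>s<k. e j ((s + (k - 1)) mod k))) $ g (q mod d)"
      by (simp add: W_def sum_component sum_subtractf add.commute)
    also have "\<dots> = 0"
      by (simp only: sum_rotate_mod[OF k]) simp
    finally show "lin_comb k (W j) \<gamma> q = 0" by simp
  qed
  then obtain r \<alpha> where \<alpha>: "\<alpha> \<in> std_simplex (Suc D)"
    and zero: "\<And>q. q < D \<Longrightarrow> lin_comb (Suc D) (\<lambda>j. W j (r j)) \<alpha> q = 0"
    using colourful_caratheodory[of D k W] by blast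
  have nD: "n = Suc D" by (simp add: n D_def d_def)
  define X where "X i = (\<Sum>j<Suc D. \<alpha> j *\<^sub>R e j ((i + r j) mod k))" for i
  have "X i = X (k - 1)" if i: "i < k" for i
  proof (rule vec_eq_iff[THEN iffD2, rule_format])
    fix c
    show "X i $ c = X (k - 1) $ c"
    proof (cases "i = k - 1")
      case False
      define q where "q = i * d + h c"
      have "q < (i + 1) * d" using h_lt[of c] by (simp add: q_def)
      also have "\<dots> \<le> D" using i False unfolding D_def by (intro mult_right_mono) auto
      finally have "q < D" .
      moreover have "q div d = i" "q mod d = h c"
        using h_lt[of c] by (simp_all add: q_def)
      then have "(X i - X (k - 1)) $ c = lin_comb (Suc D) (\<lambda>j. W j (r j)) \<alpha> q"
        by (simp add: X_def W_def lin_comb_def g_h sum_component sum_subtractf right_diff_distrib)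
      ultimately show ?thesis using zero by simp
    qed simp
  qed
  then have "intersect_equal_coeffs n k (\<lambda>i j. e j ((i + r j) mod k))"
    using \<alpha> unfolding intersect_equal_coeffs_def nD
    by (intro exI[of _ \<alpha>]) (auto simp: std_simplex_def X_def)
  then show ?thesis by (rule that)
qed

lemma colourful_partition_with_equal_coeffs:
  fixes F :: "nat \<Rightarrow> (real ^ 'd::finite) set"
  assumes k: "0 < k" and n: "n = (k - 1) * CARD('d) + 1"
    and F: "\<forall>j<n. finite (F j) \<and> card (F j) = k"
  shows "\<exists>x. colourful_partition F n k x \<and> intersect_equal_coeffs n k x"
proof -
  have "\<forall>j. \<exists>e. j < n \<longrightarrow> bij_betw e {..<k} (F j)"
    using F ex_bij_betw_nat_finite by (metis lessThan_atLeast0)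
  then obtain e where e: "\<And>j. j < n \<Longrightarrow> bij_betw (e j) {..<k} (F j)"
    by metis
  obtain r where "intersect_equal_coeffs n k (\<lambda>i j. e j ((i + r j) mod k))"
    using rotations_with_equal_coeffs[OF k n] by blast
  with colourful_partition_rotation[where F = F and e = e, OF e] show ?thesis by blast
qed

lemma card_residue_class_le:
  fixes n K d a :: nat
  assumes "n \<le> K * d" "0 < d"
  shows "card {j. j < n \<and> j mod d = a} \<le> K"
proof -
  have "inj_on (\<lambda>j. j div d) {j. j < n \<and> j mod d = a}"
    by (rule inj_onI) (metis (mono_tags, lifting) div_mult_mod_eq mem_Collect_eq)
  moreover have "(\<lambda>j. j div d) ` {j. j < n \<and> j mod d = a} \<subseteq> {..<K}"
    using assms by (auto simp: div_less_iff_less_mult)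
  ultimately show ?thesis
    using card_inj_on_le[of _ _ "{..<K}"] by fastforce
qed

definition balanced_weight :: "nat \<Rightarrow> nat set \<Rightarrow> nat \<Rightarrow> real" where
  "balanced_weight k T i = (if i \<in> T then real k - real (card T) else - real (card T))"

lemma sum_balanced_weight:
  assumes T: "T \<subseteq> {..<k}"
  shows "(\<Sum>i<k. balanced_weight k T i) = 0"
proof -
  have fin: "finite T" using T finite_subset by blast
  have "(\<Sum>i<k. balanced_weight k T i)
      = (\<Sum>i\<in>{..<k} - T. balanced_weight k T i) + (\<Sum>i\<in>T. balanced_weight k T i)"
    by (rule sum.subset_diff[OF T]) simp
  also have "\<dots> = - real (card T) * real (k - card T) + (real k - real (card T)) * real (card T)"
    using T fin by (simp add: balanced_weight_def card_Diff_subset)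
  also have "\<dots> = 0"
    using card_mono[OF _ T] by (simp add: of_nat_diff algebra_simps)
  finally show ?thesis .
qed

text \<open>With base \<open>B > |T|\<close> the largest power, which carries the positive weight \<open>k - |T|\<close>,
  outweighs all the powers carrying the negative weight \<open>- |T|\<close>.\<close>

lemma balanced_weight_power_sum_pos:
  fixes B :: real and E :: "nat \<Rightarrow> nat"
  assumes T: "T \<subseteq> {..<k}" "card T < k" and B: "real (card T) < B"
    and E: "inj_on E {..<k}" and top: "i0 \<in> T" "\<And>i. i < k \<Longrightarrow> E i \<le> E i0"
  shows "0 < (\<Sum>i<k. balanced_weight k T i * B ^ E i)"
proof -
  define c where "c = real (card T)"
  define u where "u = real k - c"
  define R where "R = {..<k} - T"
  have fin: "finite T" using T finite_subset by blast
  have "1 \<le> c" using top(1) fin by (auto simp: c_def Suc_le_eq card_gt_0_iff)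
  then have B1: "1 < B" using B by (simp add: c_def)
  have u: "0 < u" using T(2) by (simp add: u_def c_def)
  have "(\<Sum>i<k. balanced_weight k T i * B ^ E i) = (\<Sum>i\<in>R. - c * B ^ E i) + (\<Sum>i\<in>T. u * B ^ E i)"
    unfolding R_def using T(1)
    by (subst sum.subset_diff[OF T(1)]) (auto simp: balanced_weight_def c_def u_def)
  also have "\<dots> = u * (\<Sum>i\<in>T. B ^ E i) - c * (\<Sum>i\<in>R. B ^ E i)"
    by (simp add: sum_distrib_left sum_negf)
  finally have split: "(\<Sum>i<k. balanced_weight k T i * B ^ E i)
      = u * (\<Sum>i\<in>T. B ^ E i) - c * (\<Sum>i\<in>R. B ^ E i)" .
  have "B ^ E i0 \<le> (\<Sum>i\<in>T. B ^ E i)"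
    using B1 fin top(1) by (intro member_le_sum) auto
  then have top_le: "u * B ^ E i0 \<le> u * (\<Sum>i\<in>T. B ^ E i)"
    using u by simp
  have rest: "B * B ^ E i \<le> B ^ E i0" if "i \<in> R" for i
  proof -
    have "i < k" "i \<noteq> i0" using that top(1) by (auto simp: R_def)
    then have "E i < E i0"
      using top E T(1) inj_onD[OF E, of i i0] le_neq_implies_less by blast
    then show ?thesis
      using B1 power_increasing[of "Suc (E i)" "E i0" B] by simp
  qed
  have "B * (\<Sum>i\<in>R. B ^ E i) = (\<Sum>i\<in>R. B * B ^ E i)"
    by (simp add: sum_distrib_left)
  also have "\<dots> \<le> (\<Sum>i\<in>R. B ^ E i0)"
    by (rule sum_mono) (rule rest)
  also have "\<dots> = u * B ^ E i0"
    using T fin by (simp add: R_def card_Diff_subset of_nat_diff u_def c_def)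
  finally have "B * (c * (\<Sum>i\<in>R. B ^ E i)) \<le> c * (u * B ^ E i0)"
    using \<open>1 \<le> c\<close> by (simp add: mult.left_commute)
  also have "\<dots> < B * (u * B ^ E i0)"
    using B u B1 by (intro mult_strict_right_mono) (auto simp: c_def)
  finally have "c * (\<Sum>i\<in>R. B ^ E i) < u * B ^ E i0"
    using B1 by simp
  with top_le split show ?thesis by linarith
qed

lemma ex_arg_max_lessThan:
  fixes f :: "nat \<Rightarrow> 'a::linorder"
  assumes "0 < k"
  shows "\<exists>i<k. \<forall>i'<k. f i' \<le> f i"
proof -
  have "Max (f ` {..<k}) \<in> f ` {..<k}"
    using assms by (intro Max_in) auto
  then obtain i where "i < k" "f i = Max (f ` {..<k})" by auto
  then show ?thesis by (auto intro!: exI[of _ i])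
qed

lemma weighted_power_sums_not_constant:
  fixes \<alpha> :: "nat \<Rightarrow> real" and B :: real and E :: "nat \<Rightarrow> nat \<Rightarrow> nat"
  assumes J: "finite J" "card J < k" "real (card J) < B"
    and \<alpha>: "\<And>j. j \<in> J \<Longrightarrow> 0 \<le> \<alpha> j" "j0 \<in> J" "0 < \<alpha> j0"
    and E: "\<And>j. j \<in> J \<Longrightarrow> inj_on (\<lambda>i. E i j) {..<k}"
  shows "\<not> (\<forall>i<k. \<forall>i'<k. (\<Sum>j\<in>J. \<alpha> j * B ^ E i j) = (\<Sum>j\<in>J. \<alpha> j * B ^ E i' j))"
proof
  assume const: "\<forall>i<k. \<forall>i'<k. (\<Sum>j\<in>J. \<alpha> j * B ^ E i j) = (\<Sum>j\<in>J. \<alpha> j * B ^ E i' j)"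
  have k: "0 < k" using J(2) by simp
  have "\<exists>i. i < k \<and> (\<forall>i'<k. E i' j \<le> E i j)" for j
    using ex_arg_max_lessThan[OF k, of "\<lambda>i. E i j"] by blast
  then obtain top where top: "\<And>j. top j < k" "\<And>j i. i < k \<Longrightarrow> E i j \<le> E (top j) j"
    by metis
  define T where "T = top ` J"
  have T: "T \<subseteq> {..<k}" "card T \<le> card J"
    using top(1) J(1) by (auto simp: T_def card_image_le)
  define f where "f i = (\<Sum>j\<in>J. \<alpha> j * B ^ E i j)" for i
  have pos: "0 < (\<Sum>i<k. balanced_weight k T i * B ^ E i j)" if "j \<in> J" for j
    using T J that top E
    by (intro balanced_weight_power_sum_pos[of T k B "\<lambda>i. E i j" "top j"]) (auto simp: T_def)
  have "(\<Sum>i<k. balanced_weight k T i * f i) = (\<Sum>j\<in>J. \<alpha> j * (\<Sum>i<k. balanced_weight k T i * B ^ E i j))"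
    unfolding f_def sum_distrib_left by (subst sum.swap) (simp add: mult_ac)
  also have "\<dots> > 0"
  proof (rule sum_pos2[OF J(1) \<alpha>(2)])
    show "0 < \<alpha> j0 * (\<Sum>i<k. balanced_weight k T i * B ^ E i j0)"
      using \<alpha>(3) pos[OF \<alpha>(2)] by simp
    show "0 \<le> \<alpha> j * (\<Sum>i<k. balanced_weight k T i * B ^ E i j)" if "j \<in> J" for j
      using \<alpha>(1)[OF that] pos[OF that] by simp
  qed
  finally have "0 < (\<Sum>i<k. balanced_weight k T i * f i)" .
  moreover have "(\<Sum>i<k. balanced_weight k T i * f i) = (\<Sum>i<k. balanced_weight k T i * f 0)"
  proof (rule sum.cong[OF refl])
    fix i assume "i \<in> {..<k}"
    then have "f i = f 0" unfolding f_def using const k by blast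
    then show "balanced_weight k T i * f i = balanced_weight k T i * f 0" by simp
  qed
  then have "(\<Sum>i<k. balanced_weight k T i * f i) = (\<Sum>i<k. balanced_weight k T i) * f 0"
    by (simp add: sum_distrib_right)
  ultimately show False using sum_balanced_weight[OF T(1)] by simp
qed

lemma ex_pos_if_sum_pos:
  fixes f :: "'a \<Rightarrow> real"
  assumes "0 < sum f A"
  shows "\<exists>a\<in>A. 0 < f a"
  using sum_nonpos[of A f] assms by (meson not_le)

lemma axis_component: "axis i x $ c = (if c = i then x else 0)"
  by (simp add: axis_def)

lemma axis_configuration_no_equal_coeffs:
  fixes F :: "nat \<Rightarrow> (real ^ 'd::finite) set" and ax :: "nat \<Rightarrow> 'd" and B :: real
  assumes F: "\<And>j. j < n \<Longrightarrow> F j \<subseteq> range (\<lambda>p. axis (ax j) (B ^ p))"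
    and fibres: "\<And>c. card {j. j < n \<and> ax j = c} < k" and B: "real k \<le> B"
  shows "\<not> (\<exists>x. colourful_partition F n k x \<and> intersect_equal_coeffs n k x)"
proof
  assume "\<exists>x. colourful_partition F n k x \<and> intersect_equal_coeffs n k x"
  then obtain x \<alpha> where x: "\<forall>i<k. \<forall>j<n. x i j \<in> F j" "\<forall>j<n. inj_on (\<lambda>i. x i j) {..<k}"
    and \<alpha>: "\<forall>j<n. 0 \<le> \<alpha> j" "(\<Sum>j<n. \<alpha> j) = 1"
    and eq: "\<forall>i<k. \<forall>i'<k. (\<Sum>j<n. \<alpha> j *\<^sub>R x i j) = (\<Sum>j<n. \<alpha> j *\<^sub>R x i' j)"
    unfolding colourful_partition_def intersect_equal_coeffs_def by blast
  define E where "E i j = (SOME p. x i j = axis (ax j) (B ^ p))" for i j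
  have E: "x i j = axis (ax j) (B ^ E i j)" if "i < k" "j < n" for i j
    unfolding E_def by (rule someI_ex) (use x(1) F that in blast)
  have E_inj: "inj_on (\<lambda>i. E i j) {..<k}" if "j < n" for j
    using x(2) that E by (simp add: inj_on_def)
  obtain j0 where j0: "j0 < n" "0 < \<alpha> j0"
    using ex_pos_if_sum_pos[of \<alpha> "{..<n}"] \<alpha>(2) by auto
  define J where "J = {j. j < n \<and> ax j = ax j0}"
  have coord: "(\<Sum>j<n. \<alpha> j *\<^sub>R x i j) $ ax j0 = (\<Sum>j\<in>J. \<alpha> j * B ^ E i j)" if "i < k" for i
  proof -
    have "(\<Sum>j<n. \<alpha> j *\<^sub>R x i j) $ ax j0 = (\<Sum>j<n. if ax j = ax j0 then \<alpha> j * B ^ E i j else 0)"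
      using that by (auto simp: sum_component E axis_component intro: sum.cong)
    also have "\<dots> = (\<Sum>j\<in>J. \<alpha> j * B ^ E i j)"
      by (simp add: J_def sum.inter_filter[symmetric])
    finally show ?thesis .
  qed
  have "(\<Sum>j\<in>J. \<alpha> j * B ^ E i j) = (\<Sum>j\<in>J. \<alpha> j * B ^ E i' j)" if "i < k" "i' < k" for i i'
    by (simp only: coord[OF that(1), symmetric] coord[OF that(2), symmetric] eq[rule_format, OF that])
  then have "\<forall>i<k. \<forall>i'<k. (\<Sum>j\<in>J. \<alpha> j * B ^ E i j) = (\<Sum>j\<in>J. \<alpha> j * B ^ E i' j)"
    by blast
  moreover have "\<not> (\<forall>i<k. \<forall>i'<k. (\<Sum>j\<in>J. \<alpha> j * B ^ E i j) = (\<Sum>j\<in>J. \<alpha> j * B ^ E i' j))"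
  proof (rule weighted_power_sums_not_constant)
    show "finite J" "card J < k" using fibres by (simp_all add: J_def)
    then show "real (card J) < B" using B by linarith
    show "j0 \<in> J" "0 < \<alpha> j0" using j0 by (simp_all add: J_def)
    show "0 \<le> \<alpha> j" if "j \<in> J" for j using \<alpha>(1) that by (simp add: J_def)
    show "inj_on (\<lambda>i. E i j) {..<k}" if "j \<in> J" for j using E_inj that by (simp add: J_def)
  qed
  ultimately show False by contradiction
qed

lemma exists_colour_classes_without_equal_coeffs:
  assumes k: "1 \<le> k" and n: "n \<le> (k - 1) * CARD('d)"
  shows "\<exists>F :: nat \<Rightarrow> (real ^ 'd::finite) set. (\<forall>j<n. finite (F j) \<and> card (F j) = t) \<and>
           \<not> (\<exists>x. colourful_partition F n k x \<and> intersect_equal_coeffs n k x)"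
proof -
  define d where "d = CARD('d)"
  obtain g where g: "bij_betw g {..<d} (UNIV :: 'd set)"
    using ex_bij_betw_nat_finite[of "UNIV :: 'd set"] by (auto simp: d_def lessThan_atLeast0)
  define ax where "ax j = g (j mod d)" for j
  define B :: real where "B = real k + 1"
  define F where "F j = (\<lambda>p. axis (ax j) (B ^ p)) ` {..<t}" for j
  have "inj_on (\<lambda>p. axis (ax j) (B ^ p)) {..<t}" for j
    using k by (auto simp: inj_on_def axis_eq_axis B_def power_inject_exp)
  then have "\<forall>j<n. finite (F j) \<and> card (F j) = t"
    by (simp add: F_def card_image)
  moreover have "card {j. j < n \<and> ax j = c} < k" for c
  proof -
    obtain a where "a < d" "g a = c"
      using g by (metis UNIV_I bij_betw_iff_bijections lessThan_iff)
    then have "{j. j < n \<and> ax j = c} = {j. j < n \<and> j mod d = a}"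
      using g by (auto simp: ax_def bij_betw_def inj_on_def d_def)
    also have "card \<dots> \<le> k - 1"
      using n by (intro card_residue_class_le) (simp_all add: d_def)
    finally show ?thesis using k by linarith
  qed
  then have "\<not> (\<exists>x. colourful_partition F n k x \<and> intersect_equal_coeffs n k x)"
    by (intro axis_configuration_no_equal_coeffs) (auto simp: F_def B_def)
  ultimately show ?thesis by blast
qed

theorem theorem1:
  fixes k n t :: nat
  assumes "k \<ge> 1" and "n \<ge> 1" and "t \<ge> k"
  shows "(n = (k - 1) * CARD('d) + 1 \<longrightarrow> t = k \<longrightarrow>
            (\<forall>F :: nat \<Rightarrow> (real ^ 'd::finite) set.
               (\<forall>j<n. finite (F j) \<and> card (F j) = t) \<longrightarrow>
               (\<exists>x. colourful_partition F n k x \<and> intersect_equal_coeffs n k x)))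
       \<and> (n < (k - 1) * CARD('d) + 1 \<longrightarrow>
            (\<exists>F :: nat \<Rightarrow> (real ^ 'd) set.
               (\<forall>j<n. finite (F j) \<and> card (F j) = t) \<and>
               \<not> (\<exists>x. colourful_partition F n k x \<and> intersect_equal_coeffs n k x)))"
  using assms colourful_partition_with_equal_coeffs[of k n]
    exists_colour_classes_without_equal_coeffs[where 'd = 'd, of k n t]
  by auto

end
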